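(* Let $(R,\mathfrak m)$ be a noetherian local ring and $x\in R$. Then $$\operatorname{Att}_R(H^1_{xR}(R))=\operatorname{Spec}(R)\setminus V(x),$$ i.e. the set of prime ideals of $R$ not containing $x$.
   Context: $H^1_{xR}(\cdot)$ is the first local cohomology with support in $xR$. For an $R$-module $N$, $\operatorname{Att}_R(N)$ is the set of prime ideals $\mathfrak p$ of $R$ with $\mathfrak p=\operatorname{Ann}_R(N/U)$ for some submodule $U\subseteq N$. *)

theory Defs
  imports Main
begin

definition is_ideal :: "'a::comm_ring_1 set \<Rightarrow> bool" where
  "is_ideal I \<longleftrightarrow> 0 \<in> I \<and> (\<forall>a\<in>I. \<forall>b\<in>I. a + b \<in> I) \<and> (\<forall>r. \<forall>a\<in>I. r * a \<in> I)"

definition prime_ideal :: "'a::comm_ring_1 set \<Rightarrow> bool" where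
  "prime_ideal P \<longleftrightarrow> is_ideal P \<and> P \<noteq> UNIV \<and> (\<forall>a b. a * b \<in> P \<longrightarrow> a \<in> P \<or> b \<in> P)"

definition maximal_ideal :: "'a::comm_ring_1 set \<Rightarrow> bool" where
  "maximal_ideal M \<longleftrightarrow> is_ideal M \<and> M \<noteq> UNIV \<and>
     (\<forall>J. is_ideal J \<and> M \<subseteq> J \<longrightarrow> J = M \<or> J = UNIV)"

definition ideal_gen :: "'a::comm_ring_1 set \<Rightarrow> 'a set" where
  "ideal_gen F = {(\<Sum>f\<in>F. c f * f) | c. True}"

definition noetherian_ring :: "'a::comm_ring_1 itself \<Rightarrow> bool" where
  "noetherian_ring _ \<longleftrightarrow> (\<forall>I::'a set. is_ideal I \<longrightarrow> (\<exists>F. finite F \<and> F \<subseteq> I \<and> I = ideal_gen F))"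

definition local_ring_with_max :: "'a::comm_ring_1 set \<Rightarrow> bool" where
  "local_ring_with_max m \<longleftrightarrow> maximal_ideal m \<and> (\<forall>M. maximal_ideal M \<longrightarrow> M = m)"

definition Spec :: "'a::comm_ring_1 set set" where
  "Spec = {P. prime_ideal P}"

definition V :: "'a::comm_ring_1 \<Rightarrow> 'a set set" where
  "V x = {P \<in> Spec. x \<in> P}"

section \<open>H^1_{xR}(R) via the Cech complex: H^1_{xR}(R) = coker(R \<rightarrow> R_x)\<close>

text \<open>Elements of R_x are fractions a/x^n, represented by pairs (a,n).
  Two pairs represent the same element of R_x / R iff their difference lies
  in the image of R, i.e. a/x^n - b/x^m = c/1 in R_x for some c.\<close>

definition h1_rel :: "'a::comm_ring_1 \<Rightarrow> (('a \<times> nat) \<times> ('a \<times> nat)) set" where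
  "h1_rel x = {((a,n),(b,m)). \<exists>c k. x^k * (x^m * a - x^n * b - x^(n+m) * c) = 0}"

definition H1 :: "'a::comm_ring_1 \<Rightarrow> ('a \<times> nat) set set" where
  "H1 x = UNIV // h1_rel x"

definition h1_zero :: "'a::comm_ring_1 \<Rightarrow> ('a \<times> nat) set" where
  "h1_zero x = h1_rel x `` {(0,0)}"

definition h1_add :: "'a::comm_ring_1 \<Rightarrow> ('a \<times> nat) set \<Rightarrow> ('a \<times> nat) set \<Rightarrow> ('a \<times> nat) set" where
  "h1_add x A B = (\<Union>(a,n)\<in>A. \<Union>(b,m)\<in>B. h1_rel x `` {(x^m * a + x^n * b, n + m)})"

definition h1_smult :: "'a::comm_ring_1 \<Rightarrow> 'a \<Rightarrow> ('a \<times> nat) set \<Rightarrow> ('a \<times> nat) set" where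
  "h1_smult x r A = (\<Union>(a,n)\<in>A. h1_rel x `` {(r * a, n)})"

definition h1_submodule :: "'a::comm_ring_1 \<Rightarrow> ('a \<times> nat) set set \<Rightarrow> bool" where
  "h1_submodule x U \<longleftrightarrow> U \<subseteq> H1 x \<and> h1_zero x \<in> U \<and>
     (\<forall>A\<in>U. \<forall>B\<in>U. h1_add x A B \<in> U) \<and> (\<forall>r. \<forall>A\<in>U. h1_smult x r A \<in> U)"

definition h1_ann_quot :: "'a::comm_ring_1 \<Rightarrow> ('a \<times> nat) set set \<Rightarrow> 'a set" where
  "h1_ann_quot x U = {r. \<forall>A\<in>H1 x. h1_smult x r A \<in> U}"

definition Att_H1 :: "'a::comm_ring_1 \<Rightarrow> 'a set set" where
  "Att_H1 x = {P. prime_ideal P \<and> (\<exists>U. h1_submodule x U \<and> P = h1_ann_quot x U)}"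

end

theory Submission
  imports Defs
begin

(* H^1_{xR}(R) = R_x/R is x-divisible: every class a/x^n equals x * a/x^(n+1). Hence if x
   annihilates a quotient N/U, so does every r, and no attached prime contains x.
   Conversely, for a prime P with x \<notin> P let U be the kernel of H^1_{xR}(R) \<rightarrow> H^1_{xR}(R/P).
   Then r annihilates N/U iff r \<in> x^n R + P for all n, and by Krull's intersection theorem
   in the local domain R/P this happens iff r \<in> P. *)

lemma is_ideal_zero: "is_ideal I \<Longrightarrow> 0 \<in> I"
  by (simp add: is_ideal_def)

lemma is_ideal_add: "is_ideal I \<Longrightarrow> a \<in> I \<Longrightarrow> b \<in> I \<Longrightarrow> a + b \<in> I"
  by (simp add: is_ideal_def)

lemma is_ideal_mult_left: "is_ideal I \<Longrightarrow> a \<in> I \<Longrightarrow> r * a \<in> I"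
  by (simp add: is_ideal_def)

lemma is_ideal_diff: "is_ideal I \<Longrightarrow> a \<in> I \<Longrightarrow> b \<in> I \<Longrightarrow> a - b \<in> I"
  using is_ideal_add[of I a "(-1) * b"] is_ideal_mult_left[of I b "-1"] by simp

lemma is_ideal_one_imp_UNIV: "is_ideal I \<Longrightarrow> 1 \<in> I \<Longrightarrow> I = UNIV"
  using is_ideal_mult_left[of I 1] by auto

lemma is_ideal_sum: "is_ideal I \<Longrightarrow> (\<And>f. f \<in> F \<Longrightarrow> g f \<in> I) \<Longrightarrow> sum g F \<in> I"
  by (induction F rule: infinite_finite_induct) (simp_all add: is_ideal_zero is_ideal_add)

lemma ideal_gen_subset: "is_ideal I \<Longrightarrow> F \<subseteq> I \<Longrightarrow> ideal_gen F \<subseteq> I"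
  unfolding ideal_gen_def by (auto intro!: is_ideal_sum is_ideal_mult_left)

lemma is_ideal_Union_chain:
  assumes "C \<noteq> {}" and "subset.chain {I. is_ideal I} C"
  shows "is_ideal (\<Union>C)"
proof -
  have ideals: "\<And>I. I \<in> C \<Longrightarrow> is_ideal I"
    and comparable: "\<And>I J. I \<in> C \<Longrightarrow> J \<in> C \<Longrightarrow> I \<subseteq> J \<or> J \<subseteq> I"
    using assms(2) by (auto simp: subset_chain_def)
  show ?thesis unfolding is_ideal_def
  proof (intro conjI ballI allI)
    show "0 \<in> \<Union>C" using assms(1) ideals is_ideal_zero by blast
  next
    fix a b assume "a \<in> \<Union>C" "b \<in> \<Union>C"
    then obtain I J where "I \<in> C" "J \<in> C" "a \<in> I" "b \<in> J" by blast
    then obtain K where "K \<in> C" "a \<in> K" "b \<in> K" using comparable by blast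
    then show "a + b \<in> \<Union>C" using ideals is_ideal_add by blast
  next
    fix r a assume "a \<in> \<Union>C"
    then show "r * a \<in> \<Union>C" using ideals is_ideal_mult_left by blast
  qed
qed

lemma is_ideal_plus_principal:
  assumes "is_ideal P"
  shows "is_ideal {s. \<exists>t. s - t * c \<in> P}"
  unfolding is_ideal_def
proof (intro conjI ballI allI; clarsimp)
  from assms show "\<exists>t. - (t * c) \<in> P" by (intro exI[of _ 0]) (simp add: is_ideal_zero)
next
  fix a b t u assume "a - t * c \<in> P" "b - u * c \<in> P"
  with assms have "(a - t * c) + (b - u * c) \<in> P" by (rule is_ideal_add)
  then show "\<exists>v. a + b - v * c \<in> P" by (intro exI[of _ "t + u"]) (simp add: algebra_simps)
next
  fix r a t assume "a - t * c \<in> P"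
  with assms have "r * (a - t * c) \<in> P" by (rule is_ideal_mult_left)
  then show "\<exists>u. r * a - u * c \<in> P" by (intro exI[of _ "r * t"]) (simp add: algebra_simps)
qed

lemma mono_plus_principal:
  assumes "is_ideal P" and step: "\<And>n. c n - x * c (Suc n) \<in> P"
  shows "mono (\<lambda>n. {s. \<exists>t. s - t * c n \<in> P})"
  unfolding mono_iff_le_Suc
proof (intro allI subsetI CollectI)
  fix n s assume "s \<in> {s. \<exists>t. s - t * c n \<in> P}"
  then obtain t where "s - t * c n \<in> P" by blast
  then have "(s - t * c n) + t * (c n - x * c (Suc n)) \<in> P"
    using step assms(1) is_ideal_add is_ideal_mult_left by blast
  then show "\<exists>u. s - u * c (Suc n) \<in> P"
    by (intro exI[of _ "t * x"]) (simp add: algebra_simps)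
qed

lemma prime_ideal_is_ideal: "prime_ideal P \<Longrightarrow> is_ideal P"
  by (simp add: prime_ideal_def)

lemma prime_ideal_cancel_left: "prime_ideal P \<Longrightarrow> y \<notin> P \<Longrightarrow> y * a \<in> P \<Longrightarrow> a \<in> P"
  by (auto simp: prime_ideal_def)

lemma prime_ideal_power_notin: "prime_ideal P \<Longrightarrow> x \<notin> P \<Longrightarrow> x ^ k \<notin> P"
proof (induction k)
  case 0
  then show ?case using is_ideal_one_imp_UNIV by (auto simp: prime_ideal_def)
next
  case (Suc k)
  then show ?case by (auto simp: prime_ideal_def)
qed

lemma exists_maximal_ideal_superset:
  assumes "is_ideal P" and "P \<noteq> UNIV"
  obtains M where "maximal_ideal M" and "P \<subseteq> M"
proof -
  define A where "A = {J. is_ideal J \<and> 1 \<notin> J \<and> P \<subseteq> J}"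
  have "\<exists>M\<in>A. \<forall>J\<in>A. M \<subseteq> J \<longrightarrow> J = M"
  proof (rule subset_Zorn_nonempty)
    show "A \<noteq> {}" using assms is_ideal_one_imp_UNIV unfolding A_def by blast
  next
    fix C assume "C \<noteq> {}" and chain: "subset.chain A C"
    then have "subset.chain {I. is_ideal I} C"
      unfolding A_def subset_chain_def by blast
    with \<open>C \<noteq> {}\<close> have "is_ideal (\<Union>C)" by (rule is_ideal_Union_chain)
    with \<open>C \<noteq> {}\<close> chain show "\<Union>C \<in> A" unfolding A_def subset_chain_def by blast
  qed
  then obtain M where "M \<in> A" and M_max: "\<forall>J\<in>A. M \<subseteq> J \<longrightarrow> J = M" by blast
  have "maximal_ideal M"
    unfolding maximal_ideal_def
  proof (intro conjI allI impI)
    show "is_ideal M" "M \<noteq> UNIV" using \<open>M \<in> A\<close> unfolding A_def by auto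
    fix J assume "is_ideal J \<and> M \<subseteq> J"
    then show "J = M \<or> J = UNIV"
      using M_max \<open>M \<in> A\<close> is_ideal_one_imp_UNIV unfolding A_def by blast
  qed
  then show thesis using that \<open>M \<in> A\<close> unfolding A_def by blast
qed

lemma local_ring_one_minus_notin:
  assumes "local_ring_with_max m" and "x \<in> m" and "is_ideal P" and "P \<noteq> UNIV"
  shows "1 - t * x \<notin> P"
proof
  assume "1 - t * x \<in> P"
  obtain M where "maximal_ideal M" "P \<subseteq> M"
    using assms(3,4) by (rule exists_maximal_ideal_superset)
  with assms(1) have "P \<subseteq> m" by (auto simp: local_ring_with_max_def)
  have m: "is_ideal m" "m \<noteq> UNIV" using assms(1) by (auto simp: local_ring_with_max_def maximal_ideal_def)
  have "(1 - t * x) + t * x \<in> m"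
    using \<open>1 - t * x \<in> P\<close> \<open>P \<subseteq> m\<close> assms(2) m(1) is_ideal_add is_ideal_mult_left by blast
  then show False using m is_ideal_one_imp_UNIV by auto
qed

lemma noetherian_ring_mono_chain_stabilizes:
  fixes I :: "nat \<Rightarrow> 'a::comm_ring_1 set"
  assumes "noetherian_ring TYPE('a)" and ideals: "\<And>n. is_ideal (I n)" and "mono I"
  obtains N where "\<And>n. n \<ge> N \<Longrightarrow> I n = I N"
proof -
  have chain: "subset.chain {J. is_ideal J} (range I)"
    unfolding subset_chain_def
  proof (intro conjI ballI)
    show "range I \<subseteq> {J. is_ideal J}" using ideals by blast
    fix A B assume "A \<in> range I" "B \<in> range I"
    then obtain i j where "A = I i" "B = I j" by blast
    then show "A \<subseteq> B \<or> B \<subseteq> A"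
      using nat_le_linear[of i j] \<open>mono I\<close> by (metis monoD)
  qed
  have "is_ideal (\<Union>(range I))"
    using _ chain by (rule is_ideal_Union_chain) simp
  then obtain F where "finite F" "F \<subseteq> \<Union>(range I)" and gen: "\<Union>(range I) = ideal_gen F"
    using assms(1) unfolding noetherian_ring_def by auto
  obtain N where "F \<subseteq> I N"
  proof (cases "F = {}")
    case True
    then show thesis using that[of 0] by simp
  next
    case False
    obtain B where "B \<in> range I" "F \<subseteq> B"
      using \<open>finite F\<close> \<open>F \<subseteq> \<Union>(range I)\<close> _ chain by (rule finite_subset_Union_chain) simp
    then show thesis using that by blast
  qed
  then have "\<Union>(range I) \<subseteq> I N"
    unfolding gen by (rule ideal_gen_subset[OF ideals])
  then have "I n = I N" if "n \<ge> N" for n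
    using monoD[OF \<open>mono I\<close> that] by blast
  then show thesis by (rule that)
qed

text \<open>Krull's intersection theorem for the domain R/P. If r \<equiv> x^n c(n) mod P for all n,
  then c(n) \<equiv> x c(n+1), so the ideals c(n) R + P ascend; once they stabilise,
  c(N+1) \<equiv> t c(N) \<equiv> t x c(N+1) forces 1 - t x \<in> P.\<close>
lemma krull_intersection_mod_prime:
  fixes x r :: "'a::comm_ring_1"
  assumes noeth: "noetherian_ring TYPE('a)" and P: "prime_ideal P" and "x \<notin> P"
    and jacobson: "\<And>t. 1 - t * x \<notin> P"
    and divisible: "\<And>n. \<exists>c. r - x ^ n * c \<in> P"
  shows "r \<in> P"
proof (rule ccontr)
  assume "r \<notin> P"
  have PI: "is_ideal P" using P by (rule prime_ideal_is_ideal)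
  obtain c where c: "\<And>n. r - x ^ n * c n \<in> P"
    using divisible by metis
  have c_notin: "c n \<notin> P" for n
  proof
    assume "c n \<in> P"
    then have "(r - x ^ n * c n) + x ^ n * c n \<in> P"
      by (intro is_ideal_add[OF PI c] is_ideal_mult_left[OF PI])
    with \<open>r \<notin> P\<close> show False by simp
  qed
  have c_step: "c n - x * c (Suc n) \<in> P" for n
  proof -
    have "x ^ n * (c n - x * c (Suc n)) = (r - x ^ Suc n * c (Suc n)) - (r - x ^ n * c n)"
      by (simp add: algebra_simps)
    also have "\<dots> \<in> P" by (intro is_ideal_diff[OF PI c c])
    finally show ?thesis
      by (rule prime_ideal_cancel_left[OF P prime_ideal_power_notin[OF P \<open>x \<notin> P\<close>]])
  qed
  define I where "I n = {s. \<exists>t. s - t * c n \<in> P}" for n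
  have ideals: "is_ideal (I n)" for n
    unfolding I_def using PI by (rule is_ideal_plus_principal)
  have "mono I"
    unfolding I_def using PI c_step by (rule mono_plus_principal)
  then obtain N where stable: "\<And>n. n \<ge> N \<Longrightarrow> I n = I N"
    using noetherian_ring_mono_chain_stabilizes[where I = I, OF noeth ideals] by blast
  have "c (Suc N) \<in> I (Suc N)"
    unfolding I_def using is_ideal_zero[OF PI] by (intro CollectI exI[of _ 1]) simp
  then have "c (Suc N) \<in> I N" using stable[of "Suc N"] by simp
  then obtain t where "c (Suc N) - t * c N \<in> P" unfolding I_def by blast
  have "c (Suc N) * (1 - t * x) = (c (Suc N) - t * c N) + t * (c N - x * c (Suc N))"
    by (simp add: algebra_simps)
  also have "\<dots> \<in> P"
    using \<open>c (Suc N) - t * c N \<in> P\<close> c_step PI is_ideal_add is_ideal_mult_left by blast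
  finally have "1 - t * x \<in> P" using prime_ideal_cancel_left[OF P c_notin] by blast
  with jacobson show False by blast
qed

abbreviation h1_class :: "'a::comm_ring_1 \<Rightarrow> 'a \<times> nat \<Rightarrow> ('a \<times> nat) set" where
  "h1_class x p \<equiv> h1_rel x `` {p}"

lemma h1_rel_iff:
  "((a, n), (b, m)) \<in> h1_rel x \<longleftrightarrow> (\<exists>c k. x ^ k * (x ^ m * a - x ^ n * b - x ^ (n + m) * c) = 0)"
  by (simp add: h1_rel_def)

lemma equiv_h1_rel: "equiv UNIV (h1_rel x)"
proof (rule equivI)
  have "((a, n), (a, n)) \<in> h1_rel x" for a :: 'a and n
    unfolding h1_rel_iff by (intro exI[of _ 0]) simp
  then show "refl (h1_rel x)" unfolding refl_on_def by auto
  show "sym (h1_rel x)" unfolding sym_def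
  proof (clarsimp)
    fix a :: 'a and n b m assume "((a, n), (b, m)) \<in> h1_rel x"
    then obtain c k where "x ^ k * (x ^ m * a - x ^ n * b - x ^ (n + m) * c) = 0"
      unfolding h1_rel_iff by blast
    moreover have "x ^ k * (x ^ n * b - x ^ m * a - x ^ (m + n) * (- c))
        = - (x ^ k * (x ^ m * a - x ^ n * b - x ^ (n + m) * c))"
      by (simp add: algebra_simps)
    ultimately show "((b, m), (a, n)) \<in> h1_rel x" unfolding h1_rel_iff by (metis neg_0_equal_iff_equal)
  qed
  show "trans (h1_rel x)" unfolding trans_def
  proof (clarsimp)
    fix a :: 'a and n b m e l
    assume "((a, n), (b, m)) \<in> h1_rel x" "((b, m), (e, l)) \<in> h1_rel x"
    then obtain c k d j where ck: "x ^ k * (x ^ m * a - x ^ n * b - x ^ (n + m) * c) = 0"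
      and dj: "x ^ j * (x ^ l * b - x ^ m * e - x ^ (m + l) * d) = 0"
      unfolding h1_rel_iff by blast
    have "x ^ (k + j + m) * (x ^ l * a - x ^ n * e - x ^ (n + l) * (c + d))
        = x ^ (j + l) * (x ^ k * (x ^ m * a - x ^ n * b - x ^ (n + m) * c))
          + x ^ (k + n) * (x ^ j * (x ^ l * b - x ^ m * e - x ^ (m + l) * d))"
      by (simp add: algebra_simps power_add)
    with ck dj show "((a, n), (e, l)) \<in> h1_rel x" unfolding h1_rel_iff by auto
  qed
qed simp

lemma h1_class_eq: "(p, q) \<in> h1_rel x \<Longrightarrow> h1_class x p = h1_class x q"
  using equiv_class_eq[OF equiv_h1_rel] .

lemma h1_class_self: "p \<in> h1_class x p"
  using equiv_class_self[OF equiv_h1_rel] by simp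

lemma h1_class_in_H1: "h1_class x p \<in> H1 x"
  unfolding H1_def by (rule quotientI) simp

lemma H1_elem_cases:
  assumes "A \<in> H1 x"
  obtains a n where "A = h1_class x (a, n)"
  using assms unfolding H1_def by (auto elim!: quotientE)

lemma h1_rel_smult:
  assumes "((a, n), (b, m)) \<in> h1_rel x"
  shows "((r * a, n), (r * b, m)) \<in> h1_rel x"
proof -
  obtain c k where "x ^ k * (x ^ m * a - x ^ n * b - x ^ (n + m) * c) = 0"
    using assms unfolding h1_rel_iff by blast
  moreover have "x ^ k * (x ^ m * (r * a) - x ^ n * (r * b) - x ^ (n + m) * (r * c))
      = r * (x ^ k * (x ^ m * a - x ^ n * b - x ^ (n + m) * c))"
    by (simp add: algebra_simps)
  ultimately show ?thesis unfolding h1_rel_iff by auto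
qed

lemma h1_rel_add_left:
  assumes "((a, n), (a', n')) \<in> h1_rel x"
  shows "((x ^ m * a + x ^ n * b, n + m), (x ^ m * a' + x ^ n' * b, n' + m)) \<in> h1_rel x"
proof -
  obtain c k where "x ^ k * (x ^ n' * a - x ^ n * a' - x ^ (n + n') * c) = 0"
    using assms unfolding h1_rel_iff by blast
  moreover have "x ^ k * (x ^ (n' + m) * (x ^ m * a + x ^ n * b) - x ^ (n + m) * (x ^ m * a' + x ^ n' * b)
        - x ^ (n + m + (n' + m)) * c)
      = x ^ (m + m) * (x ^ k * (x ^ n' * a - x ^ n * a' - x ^ (n + n') * c))"
    by (simp add: algebra_simps power_add)
  ultimately show ?thesis unfolding h1_rel_iff by auto
qed

lemma h1_rel_add_right:
  "((b, m), (b', m')) \<in> h1_rel x \<Longrightarrow>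
    ((x ^ m * a + x ^ n * b, n + m), (x ^ m' * a + x ^ n * b', n + m')) \<in> h1_rel x"
  using h1_rel_add_left[of b m b' m' x n a] by (simp add: add.commute)

lemma h1_smult_class: "h1_smult x r (h1_class x (a, n)) = h1_class x (r * a, n)"
proof
  show "h1_smult x r (h1_class x (a, n)) \<subseteq> h1_class x (r * a, n)"
    unfolding h1_smult_def by (auto dest: h1_class_eq[OF h1_rel_smult])
  show "h1_class x (r * a, n) \<subseteq> h1_smult x r (h1_class x (a, n))"
    unfolding h1_smult_def using h1_class_self[of "(a, n)" x] by blast
qed

lemma h1_add_class:
  "h1_add x (h1_class x (a, n)) (h1_class x (b, m)) = h1_class x (x ^ m * a + x ^ n * b, n + m)"
proof
  show "h1_add x (h1_class x (a, n)) (h1_class x (b, m)) \<subseteq> h1_class x (x ^ m * a + x ^ n * b, n + m)"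
  proof
    fix z assume "z \<in> h1_add x (h1_class x (a, n)) (h1_class x (b, m))"
    then obtain a' n' b' m' where "((a, n), (a', n')) \<in> h1_rel x" "((b, m), (b', m')) \<in> h1_rel x"
      and z: "z \<in> h1_class x (x ^ m' * a' + x ^ n' * b', n' + m')"
      unfolding h1_add_def by auto
    then have "((x ^ m * a + x ^ n * b, n + m), (x ^ m' * a' + x ^ n' * b', n' + m')) \<in> h1_rel x"
      using equiv_h1_rel h1_rel_add_left h1_rel_add_right by (metis equivE transE)
    with z show "z \<in> h1_class x (x ^ m * a + x ^ n * b, n + m)" using h1_class_eq by blast
  qed
  show "h1_class x (x ^ m * a + x ^ n * b, n + m) \<subseteq> h1_add x (h1_class x (a, n)) (h1_class x (b, m))"
    unfolding h1_add_def using h1_class_self[of "(a, n)" x] h1_class_self[of "(b, m)" x] by blast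
qed

lemma h1_class_divisible: "h1_class x (a, n) = h1_smult x x (h1_class x (a, Suc n))"
proof -
  have "((a, n), (x * a, Suc n)) \<in> h1_rel x"
    unfolding h1_rel_iff by (intro exI[of _ 0]) (simp add: algebra_simps)
  then show ?thesis by (simp add: h1_smult_class h1_class_eq)
qed

lemma h1_ann_quot_UNIV_if_x_in:
  assumes "x \<in> h1_ann_quot x U"
  shows "h1_ann_quot x U = UNIV"
proof -
  have "h1_smult x r A \<in> U" if "A \<in> H1 x" for r A
  proof -
    obtain a n where A: "A = h1_class x (a, n)" using \<open>A \<in> H1 x\<close> by (rule H1_elem_cases)
    have "h1_smult x r A = h1_class x (r * a, n)"
      unfolding A by (rule h1_smult_class)
    also have "\<dots> = h1_smult x x (h1_class x (r * a, Suc n))"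
      by (rule h1_class_divisible)
    also have "\<dots> \<in> U" using assms h1_class_in_H1 unfolding h1_ann_quot_def by blast
    finally show ?thesis .
  qed
  then show ?thesis unfolding h1_ann_quot_def by blast
qed

lemma Att_H1_subset: "Att_H1 x \<subseteq> Spec - V x"
proof
  fix P assume "P \<in> Att_H1 x"
  then obtain U where P: "prime_ideal P" and "P = h1_ann_quot x U" unfolding Att_H1_def by blast
  then have "x \<notin> P" using h1_ann_quot_UNIV_if_x_in by (auto simp: prime_ideal_def)
  with P show "P \<in> Spec - V x" unfolding Spec_def V_def by blast
qed

text \<open>integral_mod P x (a, n) says that a/x^n lies in R/P inside (R/P)_x; the classes of such
  fractions form the kernel of H^1_{xR}(R) \<rightarrow> H^1_{xR}(R/P).\<close>
fun integral_mod :: "'a::comm_ring_1 set \<Rightarrow> 'a \<Rightarrow> 'a \<times> nat \<Rightarrow> bool" where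
  "integral_mod P x (a, n) \<longleftrightarrow> (\<exists>c. a - x ^ n * c \<in> P)"

definition h1_kernel_mod :: "'a::comm_ring_1 set \<Rightarrow> 'a \<Rightarrow> ('a \<times> nat) set set" where
  "h1_kernel_mod P x = h1_class x ` {p. integral_mod P x p}"

lemma integral_mod_h1_rel:
  assumes P: "prime_ideal P" and "x \<notin> P"
    and rel: "((a, n), (b, m)) \<in> h1_rel x" and "integral_mod P x (b, m)"
  shows "integral_mod P x (a, n)"
proof -
  have PI: "is_ideal P" using P by (rule prime_ideal_is_ideal)
  have cancel: "\<And>k z. x ^ k * z \<in> P \<Longrightarrow> z \<in> P"
    using prime_ideal_cancel_left[OF P prime_ideal_power_notin[OF P \<open>x \<notin> P\<close>]] by blast
  obtain c k where "x ^ k * (x ^ m * a - x ^ n * b - x ^ (n + m) * c) = 0"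
    using rel unfolding h1_rel_iff by blast
  then have rel_P: "x ^ m * a - x ^ n * b - x ^ (n + m) * c \<in> P"
    using is_ideal_zero[OF PI] cancel by metis
  obtain d where "b - x ^ m * d \<in> P" using \<open>integral_mod P x (b, m)\<close> by auto
  have "x ^ m * (a - x ^ n * (d + c)) = (x ^ m * a - x ^ n * b - x ^ (n + m) * c) + x ^ n * (b - x ^ m * d)"
    by (simp add: algebra_simps power_add)
  also have "\<dots> \<in> P" using rel_P \<open>b - x ^ m * d \<in> P\<close> PI is_ideal_add is_ideal_mult_left by blast
  finally show ?thesis using cancel by auto
qed

lemma h1_class_in_kernel_modI: "integral_mod P x p \<Longrightarrow> h1_class x p \<in> h1_kernel_mod P x"
  unfolding h1_kernel_mod_def by blast

lemma h1_class_in_kernel_mod_iff: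
  assumes "prime_ideal P" and "x \<notin> P"
  shows "h1_class x (a, n) \<in> h1_kernel_mod P x \<longleftrightarrow> integral_mod P x (a, n)"
proof
  assume "h1_class x (a, n) \<in> h1_kernel_mod P x"
  then obtain b m where "integral_mod P x (b, m)" and "h1_class x (a, n) = h1_class x (b, m)"
    unfolding h1_kernel_mod_def by auto
  then have "((a, n), (b, m)) \<in> h1_rel x"
    using h1_class_self[of "(b, m)" x] equiv_class_eq_iff[OF equiv_h1_rel] by blast
  then show "integral_mod P x (a, n)"
    using integral_mod_h1_rel[OF assms] \<open>integral_mod P x (b, m)\<close> by blast
qed (rule h1_class_in_kernel_modI)

lemma h1_submodule_kernel_mod:
  assumes PI: "is_ideal P"
  shows "h1_submodule x (h1_kernel_mod P x)"
  unfolding h1_submodule_def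
proof (intro conjI ballI allI)
  show "h1_kernel_mod P x \<subseteq> H1 x" unfolding h1_kernel_mod_def using h1_class_in_H1 by blast
  have "integral_mod P x (0, 0)"
    using is_ideal_zero[OF PI] by (intro integral_mod.simps[THEN iffD2] exI[of _ 0]) simp
  then show "h1_zero x \<in> h1_kernel_mod P x" unfolding h1_zero_def by (rule h1_class_in_kernel_modI)
next
  fix A B assume "A \<in> h1_kernel_mod P x" "B \<in> h1_kernel_mod P x"
  then obtain a n b m c d where A: "A = h1_class x (a, n)" and B: "B = h1_class x (b, m)"
    and "a - x ^ n * c \<in> P" "b - x ^ m * d \<in> P"
    unfolding h1_kernel_mod_def by fastforce
  have "(x ^ m * a + x ^ n * b) - x ^ (n + m) * (c + d) = x ^ m * (a - x ^ n * c) + x ^ n * (b - x ^ m * d)"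
    by (simp add: algebra_simps power_add)
  also have "\<dots> \<in> P"
    using \<open>a - x ^ n * c \<in> P\<close> \<open>b - x ^ m * d \<in> P\<close> PI is_ideal_add is_ideal_mult_left by blast
  finally have "integral_mod P x (x ^ m * a + x ^ n * b, n + m)" by auto
  then show "h1_add x A B \<in> h1_kernel_mod P x"
    unfolding A B h1_add_class by (rule h1_class_in_kernel_modI)
next
  fix r A assume "A \<in> h1_kernel_mod P x"
  then obtain a n c where A: "A = h1_class x (a, n)" and "a - x ^ n * c \<in> P"
    unfolding h1_kernel_mod_def by fastforce
  have "r * a - x ^ n * (r * c) = r * (a - x ^ n * c)" by (simp add: algebra_simps)
  also have "\<dots> \<in> P" using \<open>a - x ^ n * c \<in> P\<close> PI is_ideal_mult_left by blast
  finally have "integral_mod P x (r * a, n)" by auto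
  then show "h1_smult x r A \<in> h1_kernel_mod P x"
    unfolding A h1_smult_class by (rule h1_class_in_kernel_modI)
qed

lemma h1_ann_quot_kernel_mod:
  assumes noeth: "noetherian_ring TYPE('a::comm_ring_1)" and P: "prime_ideal (P :: 'a set)"
    and "x \<notin> P" and jacobson: "\<And>t. 1 - t * x \<notin> P"
  shows "h1_ann_quot x (h1_kernel_mod P x) = P"
proof
  show "P \<subseteq> h1_ann_quot x (h1_kernel_mod P x)"
    unfolding h1_ann_quot_def
  proof (intro subsetI CollectI ballI)
    fix r A assume "r \<in> P" "A \<in> H1 x"
    then obtain a n where A: "A = h1_class x (a, n)" by (auto elim: H1_elem_cases)
    have "r * a \<in> P"
      using \<open>r \<in> P\<close> prime_ideal_is_ideal[OF P] by (metis is_ideal_mult_left mult.commute)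
    then have "integral_mod P x (r * a, n)"
      by (intro integral_mod.simps[THEN iffD2] exI[of _ 0]) simp
    then show "h1_smult x r A \<in> h1_kernel_mod P x"
      unfolding A h1_smult_class by (rule h1_class_in_kernel_modI)
  qed
  show "h1_ann_quot x (h1_kernel_mod P x) \<subseteq> P"
  proof
    fix r assume "r \<in> h1_ann_quot x (h1_kernel_mod P x)"
    then have "h1_smult x r (h1_class x (1, n)) \<in> h1_kernel_mod P x" for n
      using h1_class_in_H1 unfolding h1_ann_quot_def by blast
    then have "h1_class x (r, n) \<in> h1_kernel_mod P x" for n
      by (simp add: h1_smult_class)
    then have "\<exists>c. r - x ^ n * c \<in> P" for n
      using h1_class_in_kernel_mod_iff[OF P \<open>x \<notin> P\<close>] by auto
    then show "r \<in> P" using krull_intersection_mod_prime[OF noeth P \<open>x \<notin> P\<close> jacobson] by blast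
  qed
qed

lemma Spec_minus_V_subset_Att_H1:
  assumes "noetherian_ring TYPE('a::comm_ring_1)" and "local_ring_with_max m" and "x \<in> m"
  shows "Spec - V x \<subseteq> Att_H1 (x :: 'a)"
proof
  fix P assume "P \<in> Spec - V x"
  then have P: "prime_ideal P" and "x \<notin> P" unfolding Spec_def V_def by auto
  have "1 - t * x \<notin> P" for t
    using local_ring_one_minus_notin assms(2,3) P by (auto simp: prime_ideal_def)
  then have "P = h1_ann_quot x (h1_kernel_mod P x)"
    using h1_ann_quot_kernel_mod[OF assms(1) P \<open>x \<notin> P\<close>] by simp
  then show "P \<in> Att_H1 x"
    unfolding Att_H1_def using P h1_submodule_kernel_mod[OF prime_ideal_is_ideal[OF P]] by blast
qed

theorem corollary2p4:
  fixes m :: "'a::comm_ring_1 set" and x :: 'a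
  assumes "noetherian_ring TYPE('a)"
    and "local_ring_with_max m"
    and "x \<in> m"
  shows "Att_H1 x = Spec - V x"
  using Att_H1_subset Spec_minus_V_subset_Att_H1[OF assms] by (rule equalityI)

end
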